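(* Let $T$ be a monad on $\mathsf{Set}$ which is continuous and commutative (in the senses described in the context). Then for every $n\in\mathbb{N}\cup\{\omega\}$, every $\Gamma\in T([n])$ and every set $X$, we have $\Gamma\mathrel{>\!\!>=}(i\mapsto\bot_{T(X)})=\bot_{T(X)}$, where $\bot_{T(X)}$ is the least element of $T(X)$.
   Context: $[n]=\{1,\dots,n\}$ for $n\in\mathbb{N}$, $[\omega]=\mathbb{N}$. For $\mu\in T(X)$ and $f:X\to T(Y)$, $\mu\mathrel{>\!\!>=} f$ is the Kleisli extension of $f$ applied to $\mu$. $T$ is continuous if every $T(X)$ carries an $\omega$-cppo structure (a partial order with least element $\bot_{T(X)}$ and suprema of $\omega$-chains) such that $\mathrel{>\!\!>=}$ is continuous in both arguments (ordering functions $X\to T(Y)$ pointwise). Standing assumptions of the paper in this setting: $\eta(1)\neq\bot$ in $T([1])$ (so $T([1])$ has at least two elements), and for every function $f$ the map $T(f)$ is strict, i.e. preserves least elements. $T$ is commutative if for all $n,m\in\mathbb{N}\cup\{\omega\}$, all $\Gamma\in T([n])$, $\Delta\in T([m])$, all sets $X$ and all $x_{i,j}\in X$ ($i\in[n]$, $j\in[m]$): $\Gamma\mathrel{>\!\!>=}(i\mapsto \Delta\mathrel{>\!\!>=}(j\mapsto\eta(x_{i,j})))=\Delta\mathrel{>\!\!>=}(j\mapsto\Gamma\mathrel{>\!\!>=}(i\mapsto\eta(x_{i,j})))$. *)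

theory Defs
  imports Main "HOL-Library.FuncSet" "HOL-Library.Extended_Nat"
begin

text \<open>
  A monad on Set is represented as a Kleisli triple acting on all sets
  X :: 'u set of a universe type 'u:
    TT X             -- the carrier of T(X), a subset of the value type 'v
    eta X x          -- the unit eta_X(x), for x in X
    bind X Y mu f    -- Kleisli extension of f : X -> T(Y) applied to mu in T(X)
  The order on T(X) is le X, its least element is bt X.
  The natural numbers are embedded into the universe by an injection emb,
  and [n] for n in N u {omega} is emb ` {i. 1 <= i <= n}.
\<close>

definition idx :: "(nat \<Rightarrow> 'u) \<Rightarrow> enat \<Rightarrow> 'u set" where
  "idx emb n = emb ` {i. 1 \<le> i \<and> enat i \<le> n}"

definition kleisli_monad ::
  "('u set \<Rightarrow> 'v set) \<Rightarrow> ('u set \<Rightarrow> 'u \<Rightarrow> 'v)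
   \<Rightarrow> ('u set \<Rightarrow> 'u set \<Rightarrow> 'v \<Rightarrow> ('u \<Rightarrow> 'v) \<Rightarrow> 'v) \<Rightarrow> bool" where
  "kleisli_monad TT eta bind \<longleftrightarrow>
     (\<forall>X. eta X \<in> X \<rightarrow> TT X)
   \<and> (\<forall>X Y mu f. mu \<in> TT X \<and> f \<in> X \<rightarrow> TT Y \<longrightarrow> bind X Y mu f \<in> TT Y)
   \<and> (\<forall>X Y mu f g. mu \<in> TT X \<and> f \<in> X \<rightarrow> TT Y \<and> (\<forall>x\<in>X. f x = g x)
        \<longrightarrow> bind X Y mu f = bind X Y mu g)
   \<and> (\<forall>X Y x f. x \<in> X \<and> f \<in> X \<rightarrow> TT Y \<longrightarrow> bind X Y (eta X x) f = f x)
   \<and> (\<forall>X mu. mu \<in> TT X \<longrightarrow> bind X X mu (eta X) = mu)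
   \<and> (\<forall>X Y Z mu f g. mu \<in> TT X \<and> f \<in> X \<rightarrow> TT Y \<and> g \<in> Y \<rightarrow> TT Z \<longrightarrow>
        bind Y Z (bind X Y mu f) g = bind X Z mu (\<lambda>x. bind Y Z (f x) g))"

definition is_chain :: "'v set \<Rightarrow> ('v \<Rightarrow> 'v \<Rightarrow> bool) \<Rightarrow> (nat \<Rightarrow> 'v) \<Rightarrow> bool" where
  "is_chain A le c \<longleftrightarrow> (\<forall>i. c i \<in> A) \<and> (\<forall>i. le (c i) (c (Suc i)))"

definition is_lub :: "'v set \<Rightarrow> ('v \<Rightarrow> 'v \<Rightarrow> bool) \<Rightarrow> 'v set \<Rightarrow> 'v \<Rightarrow> bool" where
  "is_lub A le S s \<longleftrightarrow> s \<in> A \<and> (\<forall>x\<in>S. le x s) \<and> (\<forall>u\<in>A. (\<forall>x\<in>S. le x u) \<longrightarrow> le s u)"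

definition omega_cppo :: "'v set \<Rightarrow> ('v \<Rightarrow> 'v \<Rightarrow> bool) \<Rightarrow> 'v \<Rightarrow> bool" where
  "omega_cppo A le b \<longleftrightarrow>
     (\<forall>x\<in>A. le x x)
   \<and> (\<forall>x\<in>A. \<forall>y\<in>A. le x y \<and> le y x \<longrightarrow> x = y)
   \<and> (\<forall>x\<in>A. \<forall>y\<in>A. \<forall>z\<in>A. le x y \<and> le y z \<longrightarrow> le x z)
   \<and> b \<in> A \<and> (\<forall>x\<in>A. le b x)
   \<and> (\<forall>c. is_chain A le c \<longrightarrow> (\<exists>s. is_lub A le (range c) s))"

definition continuous_monad ::
  "('u set \<Rightarrow> 'v set) \<Rightarrow> ('u set \<Rightarrow> 'u set \<Rightarrow> 'v \<Rightarrow> ('u \<Rightarrow> 'v) \<Rightarrow> 'v)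
   \<Rightarrow> ('u set \<Rightarrow> 'v \<Rightarrow> 'v \<Rightarrow> bool) \<Rightarrow> ('u set \<Rightarrow> 'v) \<Rightarrow> bool" where
  "continuous_monad TT bind le bt \<longleftrightarrow>
     (\<forall>X. omega_cppo (TT X) (le X) (bt X))
   \<and> (\<forall>X Y f c s. f \<in> X \<rightarrow> TT Y \<and> is_chain (TT X) (le X) c \<and> is_lub (TT X) (le X) (range c) s
        \<longrightarrow> is_lub (TT Y) (le Y) (range (\<lambda>i. bind X Y (c i) f)) (bind X Y s f))
   \<and> (\<forall>X Y mu g h. mu \<in> TT X \<and> (\<forall>i. g i \<in> X \<rightarrow> TT Y) \<and> h \<in> X \<rightarrow> TT Y
        \<and> (\<forall>x\<in>X. is_chain (TT Y) (le Y) (\<lambda>i. g i x) \<and> is_lub (TT Y) (le Y) (range (\<lambda>i. g i x)) (h x))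
        \<longrightarrow> is_lub (TT Y) (le Y) (range (\<lambda>i. bind X Y mu (g i))) (bind X Y mu h))"

definition standing_assumptions ::
  "(nat \<Rightarrow> 'u) \<Rightarrow> ('u set \<Rightarrow> 'v set) \<Rightarrow> ('u set \<Rightarrow> 'u \<Rightarrow> 'v)
   \<Rightarrow> ('u set \<Rightarrow> 'u set \<Rightarrow> 'v \<Rightarrow> ('u \<Rightarrow> 'v) \<Rightarrow> 'v) \<Rightarrow> ('u set \<Rightarrow> 'v) \<Rightarrow> bool" where
  "standing_assumptions emb TT eta bind bt \<longleftrightarrow>
     eta (idx emb 1) (emb 1) \<noteq> bt (idx emb 1)
   \<and> (\<forall>X Y f. f \<in> X \<rightarrow> Y \<longrightarrow> bind X Y (bt X) (\<lambda>x. eta Y (f x)) = bt Y)"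

definition commutative_monad ::
  "(nat \<Rightarrow> 'u) \<Rightarrow> ('u set \<Rightarrow> 'v set) \<Rightarrow> ('u set \<Rightarrow> 'u \<Rightarrow> 'v)
   \<Rightarrow> ('u set \<Rightarrow> 'u set \<Rightarrow> 'v \<Rightarrow> ('u \<Rightarrow> 'v) \<Rightarrow> 'v) \<Rightarrow> bool" where
  "commutative_monad emb TT eta bind \<longleftrightarrow>
     (\<forall>n m Gamma Delta X x.
        Gamma \<in> TT (idx emb n) \<and> Delta \<in> TT (idx emb m)
        \<and> (\<forall>i\<in>idx emb n. \<forall>j\<in>idx emb m. x i j \<in> X) \<longrightarrow>
        bind (idx emb n) X Gamma (\<lambda>i. bind (idx emb m) X Delta (\<lambda>j. eta X (x i j)))
      = bind (idx emb m) X Delta (\<lambda>j. bind (idx emb n) X Gamma (\<lambda>i. eta X (x i j))))"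

end

theory Submission
  imports Defs
begin

text \<open>Strictness of \<open>T(f)\<close> on maps out of the empty set makes \<open>\<bottom>\<^sub>X\<close> the image of
  \<open>\<bottom>\<^sub>\<emptyset>\<close>, and Kleisli extension cannot distinguish maps out of \<open>\<emptyset>\<close>; hence
  \<open>\<bottom> \<bind> f = \<bottom>\<close> for every \<open>f\<close>. Commutativity applied to \<open>\<Gamma>\<close> and \<open>\<Delta> = \<bottom>\<close>, with
  all \<open>x\<^sub>i\<^sub>j\<close> equal to one point \<open>y \<in> X\<close>, turns the two sides into
  \<open>\<Gamma> \<bind> (i \<mapsto> \<bottom>\<^sub>X)\<close> and \<open>\<bottom>\<^sub>X\<close>. An empty \<open>X\<close> is reached by factoring
  \<open>i \<mapsto> \<bottom>\<^sub>X\<close> through a nonempty set. Continuity enters only through \<open>\<bottom>\<^sub>X \<in> T(X)\<close>.\<close>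

lemma kleisli_monadD:
  assumes "kleisli_monad TT eta bind"
  shows kleisli_monad_eta_closed: "eta X \<in> X \<rightarrow> TT X"
    and kleisli_monad_bind_closed: "mu \<in> TT X \<Longrightarrow> f \<in> X \<rightarrow> TT Y \<Longrightarrow> bind X Y mu f \<in> TT Y"
    and kleisli_monad_bind_cong: "mu \<in> TT X \<Longrightarrow> f \<in> X \<rightarrow> TT Y \<Longrightarrow> (\<And>x. x \<in> X \<Longrightarrow> f x = g x)
      \<Longrightarrow> bind X Y mu f = bind X Y mu g"
    and kleisli_monad_bind_assoc: "mu \<in> TT X \<Longrightarrow> f \<in> X \<rightarrow> TT Y \<Longrightarrow> g \<in> Y \<rightarrow> TT Z
      \<Longrightarrow> bind Y Z (bind X Y mu f) g = bind X Z mu (\<lambda>x. bind Y Z (f x) g)"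
  using assms unfolding kleisli_monad_def by simp_all

lemma continuous_monad_bot_closed:
  "continuous_monad TT bind le bt \<Longrightarrow> bt X \<in> TT X"
  unfolding continuous_monad_def omega_cppo_def by simp

lemma standing_assumptions_map_strict:
  "standing_assumptions emb TT eta bind bt \<Longrightarrow> f \<in> X \<rightarrow> Y
    \<Longrightarrow> bind X Y (bt X) (\<lambda>x. eta Y (f x)) = bt Y"
  unfolding standing_assumptions_def by simp

lemma bind_bot_left:
  assumes km: "kleisli_monad TT eta bind"
    and bot_empty: "bt {} \<in> TT {}"
    and map_strict: "\<And>X Y f. f \<in> X \<rightarrow> Y \<Longrightarrow> bind X Y (bt X) (\<lambda>x. eta Y (f x)) = bt Y"
    and f: "f \<in> X \<rightarrow> TT Y"
  shows "bind X Y (bt X) f = bt Y"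
proof -
  have "bt X = bind {} X (bt {}) (eta X)"
    using map_strict[of id "{}" X] by simp
  then have "bind X Y (bt X) f = bind {} Y (bt {}) (\<lambda>x. bind X Y (eta X x) f)"
    using kleisli_monad_bind_assoc[OF km bot_empty _ f] by simp
  also have "\<dots> = bind {} Y (bt {}) (eta Y)"
    by (rule kleisli_monad_bind_cong[OF km bot_empty]) auto
  also have "\<dots> = bt Y"
    using map_strict[of id "{}" Y] by simp
  finally show ?thesis .
qed

lemma bind_const_bot_nonempty:
  assumes km: "kleisli_monad TT eta bind"
    and comm: "commutative_monad emb TT eta bind"
    and bot_closed: "\<And>X. bt X \<in> TT X"
    and map_strict: "\<And>X Y f. f \<in> X \<rightarrow> Y \<Longrightarrow> bind X Y (bt X) (\<lambda>x. eta Y (f x)) = bt Y"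
    and Gamma: "Gamma \<in> TT (idx emb n)"
    and y: "y \<in> X"
  shows "bind (idx emb n) X Gamma (\<lambda>i. bt X) = bt X"
proof -
  let ?Delta = "bt (idx emb 0)"
  have eta_y: "eta X y \<in> TT X"
    using kleisli_monad_eta_closed[OF km] y by blast
  have bot_bind_eta_y: "bind (idx emb 0) X ?Delta (\<lambda>j. eta X y) = bt X"
    by (rule bind_bot_left[OF km bot_closed map_strict]) (use eta_y in auto)
  have "bind (idx emb n) X Gamma (\<lambda>i. bind (idx emb 0) X ?Delta (\<lambda>j. eta X y))
      = bind (idx emb 0) X ?Delta (\<lambda>j. bind (idx emb n) X Gamma (\<lambda>i. eta X y))"
    using comm Gamma bot_closed[of "idx emb 0"] y
    unfolding commutative_monad_def
    by (elim allE[of _ n] allE[of _ 0] allE[of _ Gamma] allE[of _ ?Delta] allE[of _ X]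
        allE[of _ "\<lambda>i j. y"]) blast
  also have "\<dots> = bt X"
    by (rule bind_bot_left[OF km bot_closed map_strict])
      (use kleisli_monad_bind_closed[OF km Gamma] eta_y in auto)
  finally show ?thesis
    using bot_bind_eta_y by simp
qed

theorem proposition5p14:
  fixes emb :: "nat \<Rightarrow> 'u"
    and TT :: "'u set \<Rightarrow> 'v set"
    and eta :: "'u set \<Rightarrow> 'u \<Rightarrow> 'v"
    and bind :: "'u set \<Rightarrow> 'u set \<Rightarrow> 'v \<Rightarrow> ('u \<Rightarrow> 'v) \<Rightarrow> 'v"
    and le :: "'u set \<Rightarrow> 'v \<Rightarrow> 'v \<Rightarrow> bool"
    and bt :: "'u set \<Rightarrow> 'v"
  assumes "inj emb"
    and "kleisli_monad TT eta bind"
    and "continuous_monad TT bind le bt"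
    and "standing_assumptions emb TT eta bind bt"
    and "commutative_monad emb TT eta bind"
  shows "\<forall>(n::enat) Gamma (X::'u set). Gamma \<in> TT (idx emb n) \<longrightarrow>
           bind (idx emb n) X Gamma (\<lambda>i. bt X) = bt X"
proof (intro allI impI)
  fix n :: enat and Gamma and X :: "'u set"
  assume Gamma: "Gamma \<in> TT (idx emb n)"
  note km = assms(2) and comm = assms(5)
  note bot_closed = continuous_monad_bot_closed[OF assms(3)]
  note map_strict = standing_assumptions_map_strict[OF assms(4)]
  note const_bot = bind_const_bot_nonempty[OF km comm bot_closed map_strict Gamma]
  have "bind (idx emb n) X Gamma (\<lambda>i. bind UNIV X (bt UNIV) (\<lambda>u. bt X))
      = bind UNIV X (bind (idx emb n) UNIV Gamma (\<lambda>i. bt UNIV)) (\<lambda>u. bt X)"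
    by (rule kleisli_monad_bind_assoc[OF km Gamma, symmetric]) (use bot_closed in auto)
  also have "\<dots> = bind UNIV X (bt UNIV) (\<lambda>u. bt X)"
    using const_bot[of undefined UNIV] by simp
  finally show "bind (idx emb n) X Gamma (\<lambda>i. bt X) = bt X"
    using bind_bot_left[OF km bot_closed map_strict, of "\<lambda>u. bt X" UNIV X] bot_closed
    by auto
qed

end
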